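(* Let $0\le c<1$ and $0\le\delta\le q$ with $q>0$, and let $\mathbf A(\mu)=\begin{bmatrix}0&1-\delta\mu\\-c&1+c-q\mu\end{bmatrix}$. For any $k\ge1$ and any $\mu_1,\dots,\mu_k\in\big[0,\frac{(1-c)^2}{q-c\delta}\big]$, $$\Big\|\prod_{i=1}^k\mathbf A(\mu_i)\begin{bmatrix}1\\1\end{bmatrix}\Big\|\le2.$$
   Context: $\|\cdot\|$ denotes the Euclidean norm of a vector in $\mathbb R^2$; the product is an ordered matrix product. *)

theory Defs
  imports "HOL-Analysis.Analysis"
begin

definition Amat :: "real \<Rightarrow> real \<Rightarrow> real \<Rightarrow> real \<Rightarrow> real^2^2" where
  "Amat c \<delta> q \<mu> = vector [vector [0, 1 - \<delta> * \<mu>], vector [- c, 1 + c - q * \<mu>]]"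

fun Aprod :: "real \<Rightarrow> real \<Rightarrow> real \<Rightarrow> (nat \<Rightarrow> real) \<Rightarrow> nat \<Rightarrow> real^2^2" where
  "Aprod c \<delta> q \<mu> 0 = mat 1"
| "Aprod c \<delta> q \<mu> (Suc n) = Aprod c \<delta> q \<mu> n ** Amat c \<delta> q (\<mu> (Suc n))"

end

theory Submission imports Defs begin

text \<open>In the coordinates \<open>X = v\<^sub>2 - c v\<^sub>1\<close>, \<open>T = v\<^sub>1 - v\<^sub>2\<close> the quadratic form
  \<open>X\<^sup>2 + T\<^sup>2\<close> is a Lyapunov function: every admissible factor \<open>A(\<mu>)\<close> does not increase it.
  At \<open>(1, 1)\<close> it equals \<open>(1 - c)\<^sup>2\<close>, and on its sublevel set of that height
  the Euclidean norm is at most 2.  The monotonicity reduces, after rescaling by \<open>1 - c\<close>,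
  to a two-parameter polynomial inequality that is checked at the corners of the parameter
  rectangle, the polynomial being convex in each parameter separately.\<close>

definition Alyap :: "real \<Rightarrow> real^2 \<Rightarrow> real" where
  "Alyap c v = (v$2 - c * v$1)\<^sup>2 + (v$1 - v$2)\<^sup>2"

lemma normalized_step_sq_le:
  fixes c u r s t :: real
  assumes "0 \<le> c" "c < 1" "0 \<le> u" "u \<le> 1 - c" "0 \<le> r" "r \<le> 1"
  shows "(s - u * (s + c * t))\<^sup>2 + (c * t + u * r * (s + c * t))\<^sup>2 \<le> s\<^sup>2 + t\<^sup>2"
proof -
  define w where "w = 1 - c"
  define p where "p = s + c * t"
  define D where "D = (\<lambda>u r. (s - u * p)\<^sup>2 + (c * t + u * r * p)\<^sup>2 - s\<^sup>2 - t\<^sup>2)"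
  have w_pos: "w > 0" using assms by (simp add: w_def)
  have D_0: "D 0 r' \<le> 0" for r'
  proof -
    have "D 0 r' = (c\<^sup>2 - 1) * t\<^sup>2" by (simp add: D_def algebra_simps power2_eq_square)
    moreover have "c\<^sup>2 \<le> 1" using assms by (simp add: power_le_one)
    ultimately show ?thesis by (simp add: mult_nonpos_nonneg)
  qed
  have D_w_0: "D w 0 \<le> 0"
  proof -
    have pos: "w * (1 + c) > 0" using w_pos assms by simp
    have "(w * (1 + c)) * D w 0 = - ((w * (1 + c) * s + c\<^sup>2 * w * t)\<^sup>2 + w\<^sup>2 * (1 + 2 * c) * t\<^sup>2)"
      by (simp add: D_def p_def w_def power2_eq_square algebra_simps)
    also have "\<dots> \<le> (w * (1 + c)) * 0"
      using assms by (smt (verit) mult_nonneg_nonneg zero_le_power2)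
    finally show ?thesis using pos by (simp only: mult_le_cancel_left_pos)
  qed
  have D_w_1: "D w 1 \<le> 0"
  proof -
    have pos: "w\<^sup>2 * (1 + 2 * c * w) > 0" using w_pos assms by (simp add: add_pos_nonneg)
    have "(w\<^sup>2 * (1 + 2 * c * w)) * D w 1
        = - ((- 2 * c * w\<^sup>2 * s + w\<^sup>2 * (1 + 2 * c * w) * t)\<^sup>2 + 2 * c * w ^ 3 * s\<^sup>2)"
      by (simp add: D_def p_def w_def power2_eq_square power3_eq_cube algebra_simps)
    also have "\<dots> \<le> (w\<^sup>2 * (1 + 2 * c * w)) * 0"
      using assms w_pos by (smt (verit) mult_nonneg_nonneg zero_le_power2 zero_le_power)
    finally show ?thesis using pos by (simp only: mult_le_cancel_left_pos)
  qed
  have D_w: "D w r \<le> 0"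
  proof -
    have "D w r = (1 - r) * D w 0 + r * D w 1 - r * (1 - r) * w\<^sup>2 * p\<^sup>2"
      by (simp add: D_def power2_eq_square algebra_simps)
    moreover have "(1 - r) * D w 0 \<le> 0" "r * D w 1 \<le> 0" "r * (1 - r) * w\<^sup>2 * p\<^sup>2 \<ge> 0"
      using D_w_0 D_w_1 assms by (simp_all add: mult_nonneg_nonpos)
    ultimately show ?thesis by linarith
  qed
  have "w * D u r = (w - u) * D 0 r + u * D w r - u * (w - u) * w * p\<^sup>2 * (1 + r\<^sup>2)"
    by (simp add: D_def power2_eq_square algebra_simps)
  moreover have "(w - u) * D 0 r \<le> 0" "u * D w r \<le> 0" "u * (w - u) * w * p\<^sup>2 * (1 + r\<^sup>2) \<ge> 0"
    using D_0 D_w w_pos assms by (simp_all add: mult_nonneg_nonpos w_def)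
  ultimately have "w * D u r \<le> 0" by linarith
  then have "D u r \<le> 0" using w_pos by (simp add: mult_le_0_iff)
  then show ?thesis by (simp add: D_def p_def)
qed

lemma Amat_mult_vec_nth:
  "(Amat c \<delta> q \<mu> *v v) $ 1 = (1 - \<delta> * \<mu>) * v$2"
  "(Amat c \<delta> q \<mu> *v v) $ 2 = - c * v$1 + (1 + c - q * \<mu>) * v$2"
  by (simp_all add: Amat_def matrix_vector_mult_def sum_2)

lemma Alyap_Amat_le:
  fixes c \<delta> q \<mu> :: real and v :: "real^2"
  assumes c: "0 \<le> c" "c < 1" and \<delta>: "0 \<le> \<delta>" "\<delta> \<le> q" and "q > 0"
    and \<mu>: "0 \<le> \<mu>" "\<mu> \<le> (1 - c)\<^sup>2 / (q - c * \<delta>)"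
  shows "Alyap c (Amat c \<delta> q \<mu> *v v) \<le> Alyap c v"
proof -
  define x y where "x = v$1" and "y = v$2"
  define w P where "w = 1 - c" and "P = q - c * \<delta>"
  have w_pos: "w > 0" using c by (simp add: w_def)
  have P_pos: "P > 0"
  proof -
    have "c * \<delta> \<le> c * q" using c \<delta> by (simp add: mult_left_mono)
    also have "\<dots> < q" using c \<open>q > 0\<close> by simp
    finally show ?thesis by (simp add: P_def)
  qed
  define s t u r where "s = (y - c * x) / w" and "t = (x - y) / w"
    and "u = P * \<mu> / w" and "r = (q - \<delta>) / P"
  have "P * \<mu> \<le> w\<^sup>2" using \<mu> P_pos by (simp add: P_def w_def pos_le_divide_eq mult.commute)
  then have "u \<le> 1 - c" using w_pos by (simp add: u_def w_def power2_eq_square divide_le_eq)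
  moreover have "0 \<le> u" using \<mu> P_pos w_pos by (simp add: u_def)
  moreover have "0 \<le> r" "r \<le> 1"
    using \<delta> c P_pos mult_right_mono[of c 1 \<delta>] by (simp_all add: r_def P_def)
  ultimately have normalized: "(s - u * (s + c * t))\<^sup>2 + (c * t + u * r * (s + c * t))\<^sup>2 \<le> s\<^sup>2 + t\<^sup>2"
    using normalized_step_sq_le c by blast
  have ws: "w * s = y - c * x" and wt: "w * t = x - y" using w_pos by (simp_all add: s_def t_def)
  have "w * (s + c * t) = w * s + c * (w * t)" by (simp add: algebra_simps)
  also have "\<dots> = w * y" unfolding ws wt by (simp add: w_def algebra_simps)
  finally have "w * (s + c * t) = w * y" .
  then have y: "s + c * t = y" using w_pos by simp
  have wu: "w * u = P * \<mu>" using w_pos by (simp add: u_def)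
  have wur: "w * u * r = (q - \<delta>) * \<mu>" using w_pos P_pos by (simp add: u_def r_def)
  let ?Av = "Amat c \<delta> q \<mu> *v v"
  have A2: "?Av$2 - c * ?Av$1 = w * s - w * u * y"
    unfolding ws wu by (simp add: Amat_mult_vec_nth P_def x_def y_def algebra_simps)
  have A1: "?Av$1 - ?Av$2 = c * (w * t) + w * u * r * y"
    unfolding wt wur by (simp add: Amat_mult_vec_nth x_def y_def algebra_simps)
  have "Alyap c ?Av = w\<^sup>2 * ((s - u * (s + c * t))\<^sup>2 + (c * t + u * r * (s + c * t))\<^sup>2)"
    unfolding Alyap_def A1 A2 y by (simp add: power2_eq_square algebra_simps)
  moreover have "Alyap c v = w\<^sup>2 * (s\<^sup>2 + t\<^sup>2)"
    unfolding Alyap_def x_def[symmetric] y_def[symmetric] ws[symmetric] wt[symmetric]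
    by (simp add: power2_eq_square algebra_simps)
  ultimately show ?thesis using normalized by (simp add: mult_left_mono)
qed

lemma Alyap_Aprod_le:
  assumes "0 \<le> c" "c < 1" "0 \<le> \<delta>" "\<delta> \<le> q" "q > 0"
    and "\<forall>i\<in>{1..n}. 0 \<le> \<mu> i \<and> \<mu> i \<le> (1 - c)\<^sup>2 / (q - c * \<delta>)"
  shows "Alyap c (Aprod c \<delta> q \<mu> n *v v) \<le> Alyap c v"
  using assms(6)
proof (induction n arbitrary: v)
  case 0
  then show ?case by simp
next
  case (Suc n)
  then have "Alyap c (Aprod c \<delta> q \<mu> n *v (Amat c \<delta> q (\<mu> (Suc n)) *v v))
      \<le> Alyap c (Amat c \<delta> q (\<mu> (Suc n)) *v v)"
    by simp
  also have "\<dots> \<le> Alyap c v"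
    using Suc.prems by (intro Alyap_Amat_le assms(1-5)) auto
  finally show ?case by (simp add: matrix_vector_mul_assoc)
qed

lemma norm_sq_le_Alyap:
  fixes v :: "real^2"
  assumes "0 \<le> c" "c < 1"
  shows "(1 - c)\<^sup>2 * (norm v)\<^sup>2 \<le> 4 * Alyap c v"
proof -
  define X T where "X = v$2 - c * v$1" and "T = v$1 - v$2"
  have "(1 - c)\<^sup>2 * (norm v)\<^sup>2 = (X + T)\<^sup>2 + (X + c * T)\<^sup>2"
    unfolding power2_norm_eq_inner
    by (simp add: inner_vec_def sum_2 X_def T_def power2_eq_square algebra_simps)
  also have "\<dots> = 4 * (X\<^sup>2 + T\<^sup>2) - (X - T)\<^sup>2 - (X - c * T)\<^sup>2 - 2 * (1 - c\<^sup>2) * T\<^sup>2"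
    by (simp add: power2_eq_square algebra_simps)
  also have "\<dots> \<le> 4 * (X\<^sup>2 + T\<^sup>2)"
  proof -
    have "0 \<le> 2 * (1 - c\<^sup>2) * T\<^sup>2" using assms by (simp add: power_le_one)
    then show ?thesis by (smt (verit) zero_le_power2)
  qed
  finally show ?thesis by (simp add: Alyap_def X_def T_def)
qed

theorem mainTheorem11:
  fixes c \<delta> q :: real and \<mu> :: "nat \<Rightarrow> real" and k :: nat
  assumes "0 \<le> c" "c < 1" "0 \<le> \<delta>" "\<delta> \<le> q" "q > 0"
    and "k \<ge> 1"
    and "\<forall>i\<in>{1..k}. 0 \<le> \<mu> i \<and> \<mu> i \<le> (1 - c)^2 / (q - c * \<delta>)"
  shows "norm (Aprod c \<delta> q \<mu> k *v (vector [1, 1] :: real^2)) \<le> 2"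
proof -
  let ?v = "Aprod c \<delta> q \<mu> k *v (vector [1, 1] :: real^2)"
  have "(1 - c)\<^sup>2 * (norm ?v)\<^sup>2 \<le> 4 * Alyap c ?v"
    using norm_sq_le_Alyap assms(1,2) by blast
  also have "\<dots> \<le> 4 * Alyap c (vector [1, 1])"
    using Alyap_Aprod_le[OF assms(1-5,7)] by simp
  also have "\<dots> = (1 - c)\<^sup>2 * 2\<^sup>2"
    by (simp add: Alyap_def power2_eq_square algebra_simps)
  finally have "(norm ?v)\<^sup>2 \<le> 2\<^sup>2"
    using assms(2) by simp
  then show ?thesis by (rule power2_le_imp_le) simp
qed

end
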